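(* For every nonzero integer $n$, $B_n<0.65\log|n|+2.24$. That is, if $S$ is any set of positive integers with the property $D(n)$, then the number of elements $x\in S$ with $n^2<x<|n|^3$ is less than $0.65\log|n|+2.24$.
   Context: Let $n$ be a nonzero integer. A set of positive integers $S$ has the property $D(n)$ if $xy+n$ is a perfect square for all distinct $x,y\in S$. Define $B_n=\sup\{|S\cap(n^2,|n|^3)| : S \text{ has the property } D(n)\}$. Here $\log$ is the natural logarithm. *)

theory Defs
  imports Complex_Main
begin

definition has_property_D :: "int \<Rightarrow> int set \<Rightarrow> bool" where
  "has_property_D n S \<longleftrightarrow> (\<forall>x\<in>S. x > 0) \<and>
     (\<forall>x\<in>S. \<forall>y\<in>S. x \<noteq> y \<longrightarrow> (\<exists>k::int. x * y + n = k ^ 2))"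

end

(*
  Let a < b < c be elements of a D(n)-set with n^2 < a, and write ab + n = r^2, ac + n = s^2,
  bc + n = t^2 with r, s, t >= 0. The numbers X = (at - rs)^2 <= Y = (at + rs)^2 have
  X + Y and XY polynomial in a, b, c, n, with XY = n^2 (a(b + c - a) + n)^2, and X = ae + n^2
  for an integer e >= 0. For every z <= X we have z (X + Y - z) <= XY. Taking z = n^2 gives
  (b + c - a)^2 >= 4(bc + n), whence c > 4a. If the triple is not regular then e >= 1, and
  z = a + n^2 gives c > 5b as soon as |n| >= 5.

  A regular triple is determined by its two largest elements. So if x_0 < x_1 < ... < x_(m-1)
  are the elements of S in (n^2, |n|^3), then x_2 > 4 x_0 and x_k > 5 x_(k-1) for k >= 3,
  hence |n|^3 > 4 * 5^(m-3) n^2, i.e. m < 3 + log_5 (|n| / 4) < 0.65 log |n| + 2.24.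
*)

theory Submission
  imports Defs
begin

lemma mult_add_diff_le_mult:
  fixes x y z :: "'a::linordered_idom"
  assumes "z \<le> x" "x \<le> y"
  shows "z * (x + y - z) \<le> x * y"
proof -
  have "0 \<le> (x - z) * (y - z)" using assms by simp
  then show ?thesis by (simp add: algebra_simps)
qed

lemma mult_abs_le_power2:
  fixes k n :: "'a::linordered_idom"
  assumes "k \<le> \<bar>n\<bar>"
  shows "k * \<bar>n\<bar> \<le> n^2"
proof -
  have "k * \<bar>n\<bar> \<le> \<bar>n\<bar> * \<bar>n\<bar>" using mult_right_mono[OF assms abs_ge_zero] .
  then show ?thesis by (metis abs_mult_self_eq power2_eq_square)
qed

lemma less_abs_of_mult_power2_less:
  fixes k n :: "'a::linordered_idom"
  assumes "k * n^2 < \<bar>n\<bar>^3"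
  shows "k < \<bar>n\<bar>"
proof -
  have "\<bar>n\<bar>^3 = \<bar>n\<bar> * n^2" by (simp add: power2_eq_square power3_eq_cube abs_mult_self_eq)
  then show ?thesis using assms by (simp add: mult_less_cancel_right)
qed

lemma nth_sorted_list_of_set_mem:
  assumes "finite A" "i < card A"
  shows "sorted_list_of_set A ! i \<in> A"
  using assms by (metis nth_mem length_sorted_list_of_set set_sorted_list_of_set)

lemma nth_sorted_list_of_set_less:
  assumes "finite A" "i < j" "j < card A"
  shows "sorted_list_of_set A ! i < sorted_list_of_set A ! j"
  using assms sorted_wrt_nth_less[OF strict_sorted_list_of_set] by simp

lemma geometric_growth:
  fixes x :: "nat \<Rightarrow> 'a::linordered_idom"
  assumes start: "4 * x 0 < x 2"
    and step: "\<And>k. 3 \<le> k \<Longrightarrow> k < m \<Longrightarrow> 5 * x (k - 1) < x k"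
  shows "k + 2 < m \<Longrightarrow> 4 * 5^k * x 0 < x (k + 2)"
proof (induction k)
  case 0
  then show ?case using start by (simp add: numeral_2_eq_2)
next
  case (Suc k)
  then have "k + 2 < m" by simp
  then have "4 * 5^k * x 0 < x (k + 2)" by (rule Suc.IH)
  then have "5 * (4 * 5^k * x 0) < 5 * x (k + 2)" by (rule mult_strict_left_mono) simp
  also have "\<dots> < x (Suc k + 2)" using step[of "Suc k + 2"] Suc.prems by simp
  finally show ?case by (simp add: mult_ac)
qed

text \<open>Since (b + c - a)^2 - 4bc is symmetric in a, b, c, this is the usual regularity
  condition (a + b - c)^2 = 4(ab + n) for D(n)-triples.\<close>
definition regular_triple :: "int \<Rightarrow> int \<Rightarrow> int \<Rightarrow> int \<Rightarrow> bool" where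
  "regular_triple n a b c \<longleftrightarrow> (b + c - a)^2 = 4 * (b * c + n)"

lemma regular_triple_unique:
  assumes "regular_triple n a b c" "regular_triple n a' b c" "a \<le> b + c" "a' \<le> b + c"
  shows "a = a'"
proof -
  have "(b + c - a)^2 = (b + c - a')^2" using assms(1,2) by (simp add: regular_triple_def)
  then have "b + c - a = b + c - a'" using assms(3,4) by (simp add: power2_eq_iff_nonneg)
  then show ?thesis by simp
qed

locale D_triple =
  fixes n a b c r s t :: int
  assumes r_sq: "r^2 = a*b + n" and s_sq: "s^2 = a*c + n" and t_sq: "t^2 = b*c + n"
    and roots_nonneg: "0 \<le> r" "0 \<le> s" "0 \<le> t"
begin

definition X where "X = (a*t - r*s)^2"
definition Y where "Y = (a*t + r*s)^2"

lemma X_mult_Y: "X * Y = n^2 * (a*(b + c - a) + n)^2"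
proof -
  have "X * Y = (a^2*t^2 - r^2*s^2)^2" unfolding X_def Y_def by (simp add: power2_eq_square algebra_simps)
  also have "\<dots> = (a^2*(b*c + n) - (a*b + n)*(a*c + n))^2" by (simp add: r_sq s_sq t_sq)
  finally show ?thesis by (simp add: power2_eq_square algebra_simps)
qed

lemma X_plus_Y: "X + Y = 4*a^2*b*c + 2*n*a*(a + b + c) + 2*n^2"
proof -
  have "X + Y = 2*(a^2*t^2 + r^2*s^2)" unfolding X_def Y_def by (simp add: power2_eq_square algebra_simps)
  also have "\<dots> = 2*(a^2*(b*c + n) + (a*b + n)*(a*c + n))" by (simp add: r_sq s_sq t_sq)
  finally show ?thesis by (simp add: power2_eq_square algebra_simps)
qed

definition excess where "excess = n*(a + b + c) + 2*a*b*c - 2*r*s*t"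

lemma X_eq: "X = a * excess + n^2"
proof -
  have "X = a^2*t^2 - 2*a*(r*s*t) + r^2*s^2" unfolding X_def by (simp add: power2_eq_square algebra_simps)
  also have "\<dots> = a^2*(b*c + n) - 2*a*(r*s*t) + (a*b + n)*(a*c + n)" by (simp add: r_sq s_sq t_sq)
  finally show ?thesis unfolding excess_def by (simp add: power2_eq_square algebra_simps)
qed

lemma X_le_Y:
  assumes "0 \<le> a"
  shows "X \<le> Y"
proof -
  have "Y - X = 4*(a*t)*(r*s)" unfolding X_def Y_def by (simp add: power2_eq_square algebra_simps)
  moreover have "0 \<le> (a*t)*(r*s)" using assms roots_nonneg by simp
  ultimately show ?thesis by linarith
qed

lemma sum_square_diff:
  "(a*(b + c - a) + n)^2 - (X + Y - n^2) = a^2*((b + c - a)^2 - 4*(b*c + n))"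
  unfolding X_plus_Y by (simp add: power2_eq_square algebra_simps)

end

locale large_D_triple = D_triple +
  assumes n_nonzero: "n \<noteq> 0" and n_sq_less: "n^2 < a"
begin

lemma a_pos: "0 < a"
  using n_sq_less by (meson le_less_trans zero_le_power2)

lemma excess_nonneg: "0 \<le> excess"
proof (rule ccontr)
  assume "\<not> 0 \<le> excess"
  then have "a * excess \<le> a * -1" using a_pos by (intro mult_left_mono) auto
  then have "X < 0" using X_eq n_sq_less by linarith
  then show False unfolding X_def by simp
qed

lemma n_sq_le_X: "n^2 \<le> X"
  using X_eq excess_nonneg a_pos by simp

lemma quadratic_bound: "4*(b*c + n) \<le> (b + c - a)^2"
proof -
  have "n^2 * (X + Y - n^2) \<le> n^2 * (a*(b + c - a) + n)^2"
    using mult_add_diff_le_mult[OF n_sq_le_X X_le_Y] a_pos X_mult_Y by simp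
  then have "X + Y - n^2 \<le> (a*(b + c - a) + n)^2" using n_nonzero by simp
  then have "0 \<le> a^2*((b + c - a)^2 - 4*(b*c + n))" using sum_square_diff by linarith
  then show ?thesis using a_pos by (simp add: zero_le_mult_iff)
qed

lemma regular_if_excess_zero:
  assumes "excess = 0"
  shows "regular_triple n a b c"
proof -
  have "X = n^2" using X_eq assms by simp
  then have "Y = (a*(b + c - a) + n)^2" using X_mult_Y n_nonzero by simp
  then have "a^2*((b + c - a)^2 - 4*(b*c + n)) = 0" using sum_square_diff \<open>X = n^2\<close> by simp
  then show ?thesis using a_pos by (simp add: regular_triple_def)
qed

lemma irregular_bound:
  assumes "\<not> regular_triple n a b c"
  shows "(a + n^2) * (4*a^2*b*c + 2*n*a*(a + b + c) + n^2 - a) \<le> n^2 * (a*(b + c - a) + n)^2"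
proof -
  have "1 \<le> excess" using excess_nonneg regular_if_excess_zero assms by fastforce
  then have "a + n^2 \<le> X" using X_eq a_pos by simp
  from mult_add_diff_le_mult[OF this X_le_Y] show ?thesis
    using a_pos X_plus_Y X_mult_Y by (simp add: algebra_simps)
qed

end

lemma four_mul_less_of_quadratic_bound:
  fixes n a b c :: int
  assumes an: "n^2 < a" and ab: "a < b" and bc: "b < c"
    and quad: "4*(b*c + n) \<le> (b + c - a)^2"
  shows "4*a < c"
proof -
  have "\<bar>n\<bar> \<le> n^2" using mult_abs_le_power2[of 1 n] by (cases "n = 0") auto
  then have "0 < 4*a + 4*n" using an by linarith
  moreover have "4*a \<le> 4*a*(b - a)" using ab an by (simp add: le_less_trans[OF zero_le_power2])
  moreover have "(c - b - 3*a)*(c - b + a) = ((b + c - a)^2 - 4*(b*c + n)) + 4*a*(b - a) + 4*n"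
    by (simp add: power2_eq_square algebra_simps)
  ultimately have "0 < (c - b - 3*a)*(c - b + a)" using quad by linarith
  moreover have "0 < c - b + a" using an bc by (simp add: add_pos_pos le_less_trans[OF zero_le_power2])
  ultimately have "0 < c - b - 3*a" using zero_less_mult_pos2 by blast
  then show ?thesis using ab by linarith
qed

lemma five_mul_square_sum_le:
  fixes b c :: "'a::linordered_idom"
  assumes "0 \<le> b" "b \<le> c" "c \<le> 5*b"
  shows "5*(b + c)^2 \<le> 36*(b*c)"
proof -
  have "0 \<le> (5*b - c)*(5*c - b)" using assms by simp
  then show ?thesis by (simp add: power2_eq_square algebra_simps)
qed

lemma irregular_lower_estimate:
  fixes n a b c :: int
  assumes n5: "5 \<le> \<bar>n\<bar>" and an: "n^2 < a" and ab: "a < b" and bc: "b < c"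
  shows "36*n^2*a^2*(b*c) < 5*((a + n^2)*(4*a^2*b*c + 2*n*a*(a + b + c) + n^2 - a))"
proof -
  have a_ge: "5*\<bar>n\<bar> < a" using mult_abs_le_power2[OF n5] an by linarith
  have b_ge: "27 \<le> b" using a_ge n5 ab by linarith
  have c_pos: "0 < c" using a_ge ab bc n5 by linarith
  have "(5*\<bar>n\<bar>)*27 \<le> a*b" using a_ge b_ge n5 by (intro mult_mono) auto
  then have "(5*\<bar>n\<bar>*27)*(4*c) \<le> (a*b)*(4*c)" using c_pos by (intro mult_right_mono) auto
  moreover have "5*1 \<le> \<bar>n\<bar>*c" using n5 c_pos by (intro mult_mono) auto
  ultimately have lin: "60*\<bar>n\<bar>*c + 10 < 4*a*b*c" by (simp add: algebra_simps)
  have cross: "-(6*\<bar>n\<bar>*a*c) \<le> 2*n*a*(a + b + c)"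
  proof -
    have "\<bar>2*n*a*(a + b + c)\<bar> = 2*\<bar>n\<bar>*a*(a + b + c)" using a_ge ab bc by (simp add: abs_mult)
    also have "\<dots> \<le> 2*\<bar>n\<bar>*a*(3*c)" using a_ge ab bc by (intro mult_left_mono) auto
    finally show ?thesis by linarith
  qed
  have "(a + n^2)*(4*a^2*b*c - 6*\<bar>n\<bar>*a*c - a)
      \<le> (a + n^2)*(4*a^2*b*c + 2*n*a*(a + b + c) + n^2 - a)"
  proof -
    have "4*a^2*b*c - 6*\<bar>n\<bar>*a*c - a \<le> 4*a^2*b*c + 2*n*a*(a + b + c) + n^2 - a"
      using cross zero_le_power2[of n] by linarith
    then show ?thesis using a_ge by (intro mult_left_mono) auto
  qed
  moreover have "36*n^2*a^2*(b*c) + 4*a^3*b*c \<le> 5*((a + n^2)*(4*a^2*b*c))"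
  proof -
    have "0 \<le> a^2*(b*c)*(16*(a - n^2))" using an ab bc a_ge n5 by simp
    then show ?thesis by (simp add: power2_eq_square power3_eq_cube algebra_simps)
  qed
  moreover have "5*((a + n^2)*(6*\<bar>n\<bar>*a*c + a)) \<le> a^2*(60*\<bar>n\<bar>*c + 10)"
  proof -
    have "5*((a + n^2)*(6*\<bar>n\<bar>*a*c + a)) \<le> 5*((2*a)*(6*\<bar>n\<bar>*a*c + a))"
      using an a_ge c_pos by (intro mult_left_mono mult_right_mono) auto
    then show ?thesis by (simp add: power2_eq_square algebra_simps)
  qed
  moreover have "a^2*(60*\<bar>n\<bar>*c + 10) < 4*a^3*b*c"
    using mult_strict_left_mono[OF lin, of "a^2"] a_ge n5
    by (simp add: power2_eq_square power3_eq_cube algebra_simps)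
  ultimately show ?thesis by (simp add: algebra_simps)
qed

lemma five_mul_less_of_irregular_bound:
  fixes n a b c :: int
  assumes n5: "5 \<le> \<bar>n\<bar>" and an: "n^2 < a" and ab: "a < b" and bc: "b < c"
    and irr: "(a + n^2)*(4*a^2*b*c + 2*n*a*(a + b + c) + n^2 - a) \<le> n^2*(a*(b + c - a) + n)^2"
  shows "5*b < c"
proof (rule ccontr)
  assume "\<not> 5*b < c"
  have a_ge: "5*\<bar>n\<bar> < a" using mult_abs_le_power2[OF n5] an by linarith
  have "0 \<le> a*(b + c - a) + n"
  proof -
    have "a*1 \<le> a*(b + c - a)" using a_ge n5 ab bc by (intro mult_left_mono) auto
    then show ?thesis using a_ge by linarith
  qed
  moreover have "a*(b + c - a) + n \<le> a*(b + c)"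
  proof -
    have "a*1 \<le> a*a" using a_ge n5 by (intro mult_left_mono) auto
    then show ?thesis using a_ge by (simp add: algebra_simps)
  qed
  ultimately have "n^2*(a*(b + c - a) + n)^2 \<le> n^2*(a*(b + c))^2"
    by (intro mult_left_mono power_mono) auto
  moreover have "5*(n^2*(a*(b + c))^2) \<le> 36*n^2*a^2*(b*c)"
  proof -
    have "5*(b + c)^2 \<le> 36*(b*c)"
      using five_mul_square_sum_le[of b c] \<open>\<not> 5*b < c\<close> a_ge n5 ab bc by simp
    from mult_left_mono[OF this, of "n^2*a^2"]
    have "n^2*a^2*(5*(b + c)^2) \<le> n^2*a^2*(36*(b*c))" by simp
    then show ?thesis by (simp add: power_mult_distrib mult_ac)
  qed
  ultimately show False using irr irregular_lower_estimate[OF n5 an ab bc] by linarith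
qed

lemma has_property_D_root:
  assumes "has_property_D n S" "x \<in> S" "y \<in> S" "x \<noteq> y"
  obtains r where "r^2 = x*y + n" "0 \<le> r"
proof -
  obtain k where "x*y + n = k^2" using assms unfolding has_property_D_def by blast
  then show ?thesis using that[of "\<bar>k\<bar>"] by simp
qed

lemma has_property_D_large_triple:
  assumes "has_property_D n S" "n \<noteq> 0" "a \<in> S" "b \<in> S" "c \<in> S" "n^2 < a" "a < b" "b < c"
  obtains r s t where "large_D_triple n a b c r s t"
proof -
  obtain r where "r^2 = a*b + n" "0 \<le> r" using has_property_D_root assms by (metis less_irrefl)
  moreover obtain s where "s^2 = a*c + n" "0 \<le> s"
    using has_property_D_root assms by (metis less_asym less_trans)
  moreover obtain t where "t^2 = b*c + n" "0 \<le> t" using has_property_D_root assms by (metis less_irrefl)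
  ultimately have "large_D_triple n a b c r s t"
    using assms by unfold_locales auto
  then show thesis by (rule that)
qed

lemma has_property_D_four_mul_less:
  assumes "has_property_D n S" "n \<noteq> 0" "a \<in> S" "b \<in> S" "c \<in> S" "n^2 < a" "a < b" "b < c"
  shows "4*a < c"
proof -
  obtain r s t where "large_D_triple n a b c r s t" using has_property_D_large_triple assms .
  then show ?thesis using four_mul_less_of_quadratic_bound large_D_triple.quadratic_bound assms by blast
qed

lemma has_property_D_five_mul_less:
  assumes "has_property_D n S" "5 \<le> \<bar>n\<bar>" "a \<in> S" "b \<in> S" "c \<in> S" "n^2 < a" "a < b" "b < c"
    and "\<not> regular_triple n a b c"
  shows "5*b < c"
proof -
  have "n \<noteq> 0" using assms(2) by auto
  then obtain r s t where "large_D_triple n a b c r s t" using has_property_D_large_triple assms by metis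
  then show ?thesis using five_mul_less_of_irregular_bound large_D_triple.irregular_bound assms by blast
qed

lemma mult_le_ln_of_power_bound:
  fixes y B :: real
  assumes "0 \<le> y" "y \<le> 1" "(1 + y + y^2)^k \<le> B"
  shows "k * y \<le> ln B"
proof -
  have "exp (k * y) = exp y ^ k" by (simp add: exp_of_nat_mult)
  also have "\<dots> \<le> (1 + y + y^2)^k" using exp_bound[OF assms(1,2)] by (intro power_mono) auto
  finally have le: "exp (k * y) \<le> B" using assms(3) by linarith
  moreover have "0 < B" using le exp_gt_zero[of "k * y"] by linarith
  ultimately show ?thesis by (simp add: ln_ge_iff)
qed

lemma ln_4_ge: "1.17 \<le> (ln 4 :: real)"
  using mult_le_ln_of_power_bound[of "1.17/16" 16 4] by (simp add: power2_eq_square power_divide)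

lemma ln_5_ge: "1.54 \<le> (ln 5 :: real)"
  using mult_le_ln_of_power_bound[of "1.54/16" 16 5] by (simp add: power2_eq_square power_divide)

lemma log_bound_of_power_less:
  fixes m :: nat and N :: real
  assumes m3: "3 \<le> m" and less: "4 * 5^(m - 3) < N"
  shows "real m < 0.65 * ln N + 2.24"
proof -
  have "ln 4 + real (m - 3) * ln 5 = ln (4 * 5^(m - 3) :: real)" by (simp add: ln_mult ln_realpow)
  also have "\<dots> < ln N"
  proof -
    have pos: "0 < (4 * 5^(m - 3) :: real)" by simp
    then have "0 < N" using less by linarith
    then show ?thesis using ln_less_cancel_iff[OF pos] less by blast
  qed
  finally have "ln 4 + real m * ln 5 - 3 * ln 5 < ln N" using m3 by (simp add: of_nat_diff algebra_simps)
  moreover have "(real m - 3) * 1.54 \<le> (real m - 3) * ln 5"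
    using ln_5_ge m3 by (intro mult_left_mono) auto
  then have "real m * 1.54 - 3 * 1.54 \<le> real m * ln 5 - 3 * ln 5" by (simp only: left_diff_distrib)
  moreover have "3 \<le> real m" using m3 by simp
  ultimately show ?thesis using ln_4_ge by (simp add: power2_eq_square)
qed

lemma has_property_D_sorted_growth:
  fixes x :: "nat \<Rightarrow> int"
  assumes D: "has_property_D n S" and n5: "5 \<le> \<bar>n\<bar>"
    and mono: "\<And>i j. i < j \<Longrightarrow> j < m \<Longrightarrow> x i < x j"
    and mem: "\<And>i. i < m \<Longrightarrow> x i \<in> S" and above: "n^2 < x 0"
    and k: "3 \<le> k" "k < m"
  shows "5 * x (k - 1) < x k"
proof -
  have ordered: "x 0 < x 1" "x 1 < x (k - 1)" "x (k - 1) < x k"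
    using mono[of 0 1] mono[of 1 "k - 1"] mono[of "k - 1" k] k by auto
  obtain i where i: "i \<le> 1" "\<not> regular_triple n (x i) (x (k - 1)) (x k)"
  proof -
    have "x 0 \<le> x (k - 1) + x k" "x 1 \<le> x (k - 1) + x k"
      using ordered above zero_le_power2[of n] by linarith+
    then have "\<not> (regular_triple n (x 0) (x (k - 1)) (x k) \<and>
        regular_triple n (x 1) (x (k - 1)) (x k))"
      using regular_triple_unique[of n "x 0" "x (k - 1)" "x k" "x 1"] ordered(1) by auto
    then show thesis using that by (meson le_numeral_extra(4) zero_le_one)
  qed
  moreover have "n^2 < x i" "x i < x (k - 1)" using i(1) ordered above by (auto simp: le_Suc_eq)
  moreover have "i < m" "k - 1 < m" using i(1) k by auto
  ultimately show ?thesis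
    using has_property_D_five_mul_less[OF D n5 mem mem mem] ordered(3) k(2) by blast
qed

lemma has_property_D_card_bound:
  assumes D: "has_property_D n S" and n0: "n \<noteq> 0"
    and T: "T \<subseteq> S \<inter> {n^2<..<\<bar>n\<bar>^3}" and m3: "3 \<le> card T"
  shows "4 * 5^(card T - 3) < \<bar>n\<bar>"
proof -
  define x where "x i = sorted_list_of_set T ! i" for i
  have fin: "finite T" using m3 card.infinite by force
  have x_mono: "\<And>i j. i < j \<Longrightarrow> j < card T \<Longrightarrow> x i < x j"
    unfolding x_def using nth_sorted_list_of_set_less[OF fin] by blast
  have x_range: "x i \<in> S \<inter> {n^2<..<\<bar>n\<bar>^3}" if "i < card T" for i
    unfolding x_def using T nth_sorted_list_of_set_mem[OF fin that] by blast
  have x_S: "x i \<in> S" and x_above: "n^2 < x i" and x_below: "x i < \<bar>n\<bar>^3"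
    if "i < card T" for i using x_range[OF that] by auto
  have idx: "0 < card T" "1 < card T" "2 < card T" using m3 by auto
  have start: "4 * x 0 < x 2"
    using has_property_D_four_mul_less[OF D n0 x_S[OF idx(1)] x_S[OF idx(2)] x_S[OF idx(3)]
        x_above[OF idx(1)] x_mono[OF _ idx(2)] x_mono[OF _ idx(3)]] by simp
  then have "4 * n^2 < \<bar>n\<bar>^3" using x_above[of 0] x_below[of 2] m3 by simp
  then have n5: "5 \<le> \<bar>n\<bar>" using less_abs_of_mult_power2_less by fastforce
  have step: "5 * x (k - 1) < x k" if "3 \<le> k" "k < card T" for k
    using has_property_D_sorted_growth[OF D n5, of "card T" x k] x_mono x_S x_above[OF idx(1)] that
    by blast
  have "card T - 3 + 2 = card T - 1" using m3 by simp
  then have "4 * 5^(card T - 3) * x 0 < x (card T - 1)"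
    using geometric_growth[where m = "card T" and k = "card T - 3", OF start step] m3 by simp
  moreover have "4 * 5^(card T - 3) * n^2 < 4 * 5^(card T - 3) * x 0"
    using x_above[of 0] m3 by simp
  ultimately have "4 * 5^(card T - 3) * n^2 < \<bar>n\<bar>^3" using x_below[of "card T - 1"] m3 by linarith
  then show ?thesis by (rule less_abs_of_mult_power2_less)
qed

theorem theorem2:
  fixes n :: int and S :: "int set"
  assumes "n \<noteq> 0" and "has_property_D n S"
  shows "real (card (S \<inter> {n ^ 2 <..< \<bar>n\<bar> ^ 3})) < 0.65 * ln (real_of_int \<bar>n\<bar>) + 2.24"
proof -
  define m where "m = card (S \<inter> {n ^ 2 <..< \<bar>n\<bar> ^ 3})"
  have "real m < 0.65 * ln (real_of_int \<bar>n\<bar>) + 2.24"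
  proof (cases "m \<le> 2")
    case True
    then have "real m \<le> 2" by simp
    moreover have "0 \<le> ln (real_of_int \<bar>n\<bar>)" using assms(1) by simp
    ultimately show ?thesis by (simp add: power2_eq_square)
  next
    case False
    then have "4 * 5^(m - 3) < \<bar>n\<bar>"
      unfolding m_def using has_property_D_card_bound[OF assms(2,1)] by simp
    then have "real_of_int (4 * 5^(m - 3)) < real_of_int \<bar>n\<bar>" by (simp only: of_int_less_iff)
    then show ?thesis using log_bound_of_power_less[of m] False by simp
  qed
  then show ?thesis unfolding m_def .
qed

end
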